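(* Suppose the weights satisfy the discrete Pearson equations $\theta(k+1)w^{(a)}(k+1)=\sigma^{(a)}(k)w^{(a)}(k)$, $k\in\mathbb N_0$, $a\in\{1,2\}$, where $\theta,\sigma^{(1)},\sigma^{(2)}$ are polynomials, $\theta(0)=0$, $\deg\theta=N$ and $\max(\deg\sigma^{(1)},\deg\sigma^{(2)})=M$. Then the Laguerre--Freud matrix $\Psi:=\Pi^{-1}\theta(T)$ is a banded matrix with lower bandwidth $2M$ and upper bandwidth $N$, i.e. $\Psi=(\Lambda^\top)^{2M}\psi^{(-2M)}+\cdots+\psi^{(N)}\Lambda^N$ with diagonal matrices $\psi^{(j)}$, and the following connection formulas hold: \[ \theta(z)B(z-1)=\Psi B(z),\qquad (A^{(a)}(z+1))^\top\sigma^{(a)}(z)=(A^{(a)}(z))^\top\Psi,\quad a\in\{1,2\}. \]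
   Context: Let $w^{(1)},w^{(2)}:\mathbb N_0\to\mathbb C$ be weights, $X(x)=(1,x,x^2,\dots)^\top$, $X^{(1)}(x)=(1,0,x,0,x^2,\dots)^\top$, $X^{(2)}(x)=(0,1,0,x,0,\dots)^\top$, and $\mathscr M=\sum_k X(k)(w^{(1)}(k)X^{(1)}(k)+w^{(2)}(k)X^{(2)}(k))^\top$ the moment matrix (series absolutely convergent). Assume all leading principal minors of $\mathscr M$ are nonzero, so $\mathscr M=S^{-1}H\tilde S^{-\top}$ with $S,\tilde S$ lower unitriangular and $H$ diagonal. Type II polynomials: $B=SX$; type I polynomials: $A^{(a)}=H^{-1}\tilde SX^{(a)}$. $\Lambda$ has ones on the first superdiagonal; $T=S\Lambda S^{-1}$ (so $TB(z)=zB(z)$). $L$ is the Pascal matrix $L_{n,m}=\binom nm$ for $n\ge m$, and $\Pi^{-1}=SL^{-1}S^{-1}$. *)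

theory Defs
  imports Complex_Main "HOL-Computational_Algebra.Polynomial" "Jordan_Normal_Form.Determinant"
begin

type_synonym imat = "nat \<Rightarrow> nat \<Rightarrow> complex"
type_synonym ivec = "nat \<Rightarrow> complex"

text \<open>Product of semi-infinite matrices (entries are series; in all uses below the
  sums have only finitely many nonzero terms).\<close>
definition imul :: "imat \<Rightarrow> imat \<Rightarrow> imat" where
  "imul A B = (\<lambda>i j. \<Sum>k. A i k * B k j)"

definition iid :: imat where
  "iid = (\<lambda>i j. if i = j then 1 else 0)"

definition idiag :: "ivec \<Rightarrow> imat" where
  "idiag h = (\<lambda>i j. if i = j then h i else 0)"

definition itrans :: "imat \<Rightarrow> imat" where
  "itrans A = (\<lambda>i j. A j i)"

definition ipow :: "imat \<Rightarrow> nat \<Rightarrow> imat" where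
  "ipow A n = (imul A ^^ n) iid"

definition ipoly :: "complex poly \<Rightarrow> imat \<Rightarrow> imat" where
  "ipoly p A = (\<lambda>i j. \<Sum>k\<le>degree p. coeff p k * ipow A k i j)"

definition lower_unitri :: "imat \<Rightarrow> bool" where
  "lower_unitri A \<longleftrightarrow> (\<forall>i j. i < j \<longrightarrow> A i j = 0) \<and> (\<forall>i. A i i = 1)"

definition lower_tri :: "imat \<Rightarrow> bool" where
  "lower_tri A \<longleftrightarrow> (\<forall>i j. i < j \<longrightarrow> A i j = 0)"

definition Lam :: imat where
  "Lam = (\<lambda>i j. if j = Suc i then 1 else 0)"

definition Pascal :: imat where
  "Pascal = (\<lambda>n m. of_nat (n choose m))"

definition Xv :: "complex \<Rightarrow> ivec" where
  "Xv x = (\<lambda>m. x ^ m)"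
definition X1 :: "complex \<Rightarrow> ivec" where
  "X1 x = (\<lambda>m. if even m then x ^ (m div 2) else 0)"
definition X2 :: "complex \<Rightarrow> ivec" where
  "X2 x = (\<lambda>m. if odd m then x ^ (m div 2) else 0)"

definition moment :: "(nat \<Rightarrow> complex) \<Rightarrow> (nat \<Rightarrow> complex) \<Rightarrow> imat" where
  "moment w1 w2 = (\<lambda>n m. \<Sum>k. Xv (of_nat k) n *
       (w1 k * X1 (of_nat k) m + w2 k * X2 (of_nat k) m))"

definition lead_minor :: "imat \<Rightarrow> nat \<Rightarrow> complex" where
  "lead_minor A n = det (mat (Suc n) (Suc n) (\<lambda>(i, j). A i j))"

text \<open>Type II polynomials B = S X, and type I polynomials A^(a) = H^{-1} S~ X^(a)
  (H = diag h).\<close>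
definition typeII :: "imat \<Rightarrow> complex \<Rightarrow> ivec" where
  "typeII S z = (\<lambda>n. \<Sum>m\<le>n. S n m * Xv z m)"
definition typeI :: "ivec \<Rightarrow> imat \<Rightarrow> (complex \<Rightarrow> ivec) \<Rightarrow> complex \<Rightarrow> ivec" where
  "typeI h St Xa z = (\<lambda>n. (1 / h n) * (\<Sum>m\<le>n. St n m * Xa z m))"

end

theory Submission
  imports Defs
begin

(* T = S Lam S^-1 has upper bandwidth 1, so theta(T), and hence Psi, has upper bandwidth N;
  the connection formula for B follows from T B(z) = z B(z) and Pi^-1 B(z) = B(z - 1).
  For the lower bandwidth, biorthogonality of B with the linear forms
  Q_m(k) = w1(k) A1_m(k) + w2(k) A2_m(k) turns this formula into
  Psi_nm = sum_k theta(k) B_n(k - 1) Q_m(k). Shifting k by one (theta(0) = 0) and applying the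
  Pearson equations gives sum_k B_n(k) (w1(k) sigma1(k) A1_m(k + 1) + w2(k) sigma2(k) A2_m(k + 1)).
  As A1_m and A2_m have degrees at most m/2 and (m - 1)/2, the polynomials sigma_a(x) A_a,m(x + 1)
  are sum_{j <= 2M + m} d_j X^(a)(x)_j with coefficients d_j common to a = 1, 2. Hence
  Psi_nm = h_n sum_j d_j (S~^-1)_jn, which vanishes for n > 2M + m because S~^-1 is lower
  triangular; contracting this expression with the type I polynomials gives their connection
  formulas. *)

section \<open>Semi-infinite matrices of finite upper bandwidth\<close>

definition upper_band :: "nat \<Rightarrow> imat \<Rightarrow> bool" where
  "upper_band c A \<longleftrightarrow> (\<forall>i j. i + c < j \<longrightarrow> A i j = 0)"

(* A vector as the matrix all of whose columns equal it, so that matrix-vector products are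
  instances of imul. *)
definition icol :: "ivec \<Rightarrow> imat" where
  "icol v = (\<lambda>i j. v i)"

lemma upper_bandD: "upper_band c A \<Longrightarrow> i + c < j \<Longrightarrow> A i j = 0"
  unfolding upper_band_def by blast

lemma upper_band_mono: "upper_band c A \<Longrightarrow> c \<le> d \<Longrightarrow> upper_band d A"
  unfolding upper_band_def by auto

lemma imul_upper_band:
  assumes "upper_band c A"
  shows "imul A B i j = (\<Sum>k\<le>i + c. A i k * B k j)"
  unfolding imul_def by (rule suminf_finite) (use upper_bandD[OF assms] in auto)

lemma upper_band_imul:
  assumes "upper_band a A" "upper_band b B"
  shows "upper_band (a + b) (imul A B)"
  unfolding upper_band_def
proof (intro allI impI)
  fix i j assume "i + (a + b) < j"
  then show "imul A B i j = 0"
    unfolding imul_upper_band[OF assms(1)]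
    by (intro sum.neutral) (auto intro!: upper_bandD[OF assms(2)])
qed

lemma imul_assoc:
  assumes A: "upper_band a A" and B: "upper_band b B"
  shows "imul (imul A B) C = imul A (imul B C)"
proof (intro ext)
  fix i j
  have BC: "imul B C l j = (\<Sum>k\<le>i + a + b. B l k * C k j)" if "l \<le> i + a" for l
  proof -
    have "upper_band (i + a + b - l) B" using upper_band_mono[OF B] that by simp
    then show ?thesis using that by (simp add: imul_upper_band)
  qed
  have "imul (imul A B) C i j = (\<Sum>k\<le>i + (a + b). (\<Sum>l\<le>i + a. A i l * B l k) * C k j)"
    unfolding imul_upper_band[OF upper_band_imul[OF A B]] imul_upper_band[OF A] ..
  also have "\<dots> = (\<Sum>l\<le>i + a. A i l * (\<Sum>k\<le>i + a + b. B l k * C k j))"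
    by (simp add: sum_distrib_left sum_distrib_right mult.assoc add.assoc) (rule sum.swap)
  also have "\<dots> = imul A (imul B C) i j"
    unfolding imul_upper_band[OF A] by (intro sum.cong refl) (simp add: BC)
  finally show "imul (imul A B) C i j = imul A (imul B C) i j" .
qed

lemma upper_band_iid: "upper_band 0 iid"
  unfolding upper_band_def iid_def by auto

lemma upper_band_idiag: "upper_band 0 (idiag h)"
  unfolding upper_band_def idiag_def by auto

lemma upper_band_Lam: "upper_band 1 Lam"
  unfolding upper_band_def Lam_def by auto

lemma upper_band_Pascal: "upper_band 0 Pascal"
  unfolding upper_band_def Pascal_def by auto

lemma upper_band_lower_tri: "lower_tri A \<Longrightarrow> upper_band 0 A"
  unfolding upper_band_def lower_tri_def by auto

lemma upper_band_lower_unitri: "lower_unitri A \<Longrightarrow> upper_band 0 A"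
  unfolding upper_band_def lower_unitri_def by auto

lemma imul_iid_left: "imul iid A = A"
proof (intro ext)
  fix i j
  have e: "(\<lambda>k. iid i k * A k j) = (\<lambda>k. if k = i then A i j else 0)"
    by (auto simp: iid_def)
  show "imul iid A i j = A i j"
    unfolding imul_upper_band[OF upper_band_iid] e by simp
qed

lemma imul_idiag_left: "imul (idiag h) A i j = h i * A i j"
proof -
  have e: "(\<lambda>k. idiag h i k * A k j) = (\<lambda>k. if k = i then h i * A i j else 0)"
    by (auto simp: idiag_def)
  show ?thesis
    unfolding imul_upper_band[OF upper_band_idiag] e by simp
qed

lemma imul_idiag_right:
  assumes "upper_band c A"
  shows "imul A (idiag h) i k = A i k * h k"
proof -
  have e: "(\<lambda>l. A i l * idiag h l k) = (\<lambda>l. if l = k then A i k * h k else 0)"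
    by (auto simp: idiag_def)
  show ?thesis
    unfolding imul_upper_band[OF assms] e using upper_bandD[OF assms, of i k] by auto
qed

lemma imul_smult:
  assumes "upper_band c A"
  shows "imul A (\<lambda>i j. s * V i j) = (\<lambda>i j. s * imul A V i j)"
  by (intro ext) (simp add: imul_upper_band[OF assms] sum_distrib_left mult.left_commute)

lemma ipow_0: "ipow A 0 = iid"
  unfolding ipow_def by simp

lemma ipow_Suc: "ipow A (Suc k) = imul A (ipow A k)"
  unfolding ipow_def by simp

lemma upper_band_ipow:
  assumes "upper_band 1 A"
  shows "upper_band k (ipow A k)"
proof (induction k)
  case 0
  then show ?case by (simp add: ipow_0 upper_band_iid)
next
  case (Suc k)
  then show ?case using upper_band_imul[OF assms Suc] by (simp add: ipow_Suc)
qed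

lemma upper_band_ipoly:
  assumes "upper_band 1 A"
  shows "upper_band (degree p) (ipoly p A)"
  unfolding upper_band_def ipoly_def
  by (auto intro!: sum.neutral upper_bandD[OF upper_band_ipow[OF assms]])

lemma imul_ipoly:
  assumes A: "upper_band 1 A"
  shows "imul (ipoly p A) V i j = (\<Sum>k\<le>degree p. coeff p k * imul (ipow A k) V i j)"
proof -
  have pow: "imul (ipow A k) V i j = (\<Sum>l\<le>i + degree p. ipow A k i l * V l j)"
    if "k \<le> degree p" for k
    using imul_upper_band[OF upper_band_mono[OF upper_band_ipow[OF A] that]] .
  have "imul (ipoly p A) V i j
      = (\<Sum>l\<le>i + degree p. (\<Sum>k\<le>degree p. coeff p k * ipow A k i l) * V l j)"
    unfolding imul_upper_band[OF upper_band_ipoly[OF A]] by (simp add: ipoly_def)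
  also have "\<dots> = (\<Sum>k\<le>degree p. coeff p k * (\<Sum>l\<le>i + degree p. ipow A k i l * V l j))"
    by (simp add: sum_distrib_left sum_distrib_right mult.assoc) (rule sum.swap)
  also have "\<dots> = (\<Sum>k\<le>degree p. coeff p k * imul (ipow A k) V i j)"
    by (intro sum.cong refl) (simp add: pow)
  finally show ?thesis .
qed

lemma imul_ipow_eigen:
  assumes A: "upper_band 1 A" and eigen: "imul A V = (\<lambda>i j. z * V i j)"
  shows "imul (ipow A k) V = (\<lambda>i j. z ^ k * V i j)"
proof (induction k)
  case 0
  then show ?case by (simp add: ipow_0 imul_iid_left)
next
  case (Suc k)
  have "imul (ipow A (Suc k)) V = imul A (imul (ipow A k) V)"
    by (simp add: ipow_Suc imul_assoc[OF A upper_band_ipow[OF A]])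
  also have "\<dots> = (\<lambda>i j. z ^ Suc k * V i j)"
    by (simp add: Suc imul_smult[OF A] eigen mult_ac)
  finally show ?case .
qed

lemma imul_ipoly_eigen:
  assumes A: "upper_band 1 A" and eigen: "imul A V = (\<lambda>i j. z * V i j)"
  shows "imul (ipoly p A) V = (\<lambda>i j. poly p z * V i j)"
  by (intro ext)
    (simp add: imul_ipoly[OF A] imul_ipow_eigen[OF A eigen] poly_altdef sum_distrib_right mult.assoc)

section \<open>The connection formula for the type II polynomials\<close>

lemma icol_typeII:
  assumes "upper_band 0 S"
  shows "icol (typeII S z) = imul S (icol (Xv z))"
  by (intro ext) (simp add: imul_upper_band[OF assms] icol_def typeII_def)

lemma imul_Lam_Xv: "imul Lam (icol (Xv z)) = (\<lambda>i j. z * icol (Xv z) i j)"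
proof (intro ext)
  fix i j
  have e: "(\<lambda>k. Lam i k * icol (Xv z) k j) = (\<lambda>k. if k = Suc i then z ^ Suc i else 0)"
    by (auto simp: Lam_def icol_def Xv_def)
  show "imul Lam (icol (Xv z)) i j = z * icol (Xv z) i j"
    unfolding imul_upper_band[OF upper_band_Lam] e by (simp add: icol_def Xv_def)
qed

lemma imul_Pascal_Xv: "imul Pascal (icol (Xv (z - 1))) = icol (Xv z)"
proof (intro ext)
  fix i j
  have "imul Pascal (icol (Xv (z - 1))) i j
      = (\<Sum>k\<le>i. of_nat (i choose k) * (z - 1) ^ k * 1 ^ (i - k))"
    unfolding imul_upper_band[OF upper_band_Pascal] by (simp add: Pascal_def icol_def Xv_def)
  also have "\<dots> = ((z - 1) + 1) ^ i"
    by (rule binomial_ring[symmetric])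
  finally show "imul Pascal (icol (Xv (z - 1))) i j = icol (Xv z) i j"
    by (simp add: icol_def Xv_def)
qed

lemma imul_Pascal_inv_Xv:
  assumes "lower_tri Li" "imul Li Pascal = iid"
  shows "imul Li (icol (Xv z)) = icol (Xv (z - 1))"
proof -
  have "imul Li (icol (Xv z)) = imul (imul Li Pascal) (icol (Xv (z - 1)))"
    by (simp add: imul_Pascal_Xv imul_assoc[OF upper_band_lower_tri[OF assms(1)] upper_band_Pascal])
  then show ?thesis by (simp add: assms imul_iid_left)
qed

lemma imul_conj_typeII:
  assumes S: "upper_band 0 S" and Si: "upper_band 0 Si" and Si_S: "imul Si S = iid"
    and A: "upper_band a A"
  shows "imul (imul (imul S A) Si) (icol (typeII S z)) = imul S (imul A (icol (Xv z)))"
proof -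
  have "imul (imul (imul S A) Si) (icol (typeII S z))
      = imul (imul S A) (imul Si (imul S (icol (Xv z))))"
    by (simp add: imul_assoc[OF upper_band_imul[OF S A] Si] icol_typeII[OF S])
  also have "\<dots> = imul (imul S A) (icol (Xv z))"
    by (simp add: imul_assoc[symmetric, OF Si S] Si_S imul_iid_left)
  finally show ?thesis by (simp add: imul_assoc[OF S A])
qed

lemma laguerre_freud_typeII:
  assumes S: "upper_band 0 S" and Si: "upper_band 0 Si" and Si_S: "imul Si S = iid"
    and Li: "lower_tri Li" and Li_Pascal: "imul Li Pascal = iid"
  shows "imul (imul (imul (imul S Li) Si) (ipoly p (imul (imul S Lam) Si))) (icol (typeII S z))
    = (\<lambda>i j. poly p z * icol (typeII S (z - 1)) i j)"
proof -
  let ?T = "imul (imul S Lam) Si" and ?P = "imul (imul S Li) Si"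
  have T: "upper_band 1 ?T"
    using upper_band_imul[OF upper_band_imul[OF S upper_band_Lam] Si] by simp
  have P: "upper_band 0 ?P"
    using upper_band_imul[OF upper_band_imul[OF S upper_band_lower_tri[OF Li]] Si] by simp
  have "imul ?T (icol (typeII S z)) = imul S (imul Lam (icol (Xv z)))"
    by (rule imul_conj_typeII[OF S Si Si_S upper_band_Lam])
  also have "\<dots> = (\<lambda>i j. z * icol (typeII S z) i j)"
    by (simp add: imul_Lam_Xv imul_smult[OF S] icol_typeII[OF S])
  finally have "imul (ipoly p ?T) (icol (typeII S z)) = (\<lambda>i j. poly p z * icol (typeII S z) i j)"
    by (rule imul_ipoly_eigen[OF T])
  moreover have "imul ?P (icol (typeII S z)) = imul S (imul Li (icol (Xv z)))"
    by (rule imul_conj_typeII[OF S Si Si_S upper_band_lower_tri[OF Li]])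
  then have "imul ?P (icol (typeII S z)) = icol (typeII S (z - 1))"
    by (simp add: imul_Pascal_inv_Xv[OF Li Li_Pascal] icol_typeII[OF S])
  ultimately show ?thesis
    by (simp add: imul_assoc[OF P upper_band_ipoly[OF T]] imul_smult[OF P])
qed

section \<open>Gauss--Borel factorization and biorthogonality\<close>

lemma moment_gauss_borel_entry:
  assumes Si: "upper_band 0 Si" and gb: "Mo = imul (imul Si (idiag h)) (itrans Sti)"
  shows "Mo i j = (\<Sum>k\<le>i. Si i k * (h k * Sti j k))"
  unfolding gb imul_upper_band[OF upper_band_imul[OF Si upper_band_idiag, simplified]]
  by (simp add: imul_idiag_right[OF Si] itrans_def mult.assoc)

lemma lead_minor_gauss_borel:
  assumes Si: "lower_unitri Si" and Sti: "lower_unitri Sti"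
    and gb: "Mo = imul (imul Si (idiag h)) (itrans Sti)"
  shows "lead_minor Mo n = (\<Prod>i<Suc n. h i)"
proof -
  let ?n = "Suc n"
  define A where "A = mat ?n ?n (\<lambda>(i, k). Si i k)"
  define C where "C = mat ?n ?n (\<lambda>(k, j). h k * Sti j k)"
  have AC: "mat ?n ?n (\<lambda>(i, j). Mo i j) = A * C"
  proof (rule eq_matI)
    fix i j assume "i < dim_row (A * C)" and "j < dim_col (A * C)"
    then have i: "i < ?n" and j: "j < ?n" by (auto simp: A_def C_def)
    have "(A * C) $$ (i, j) = (\<Sum>k\<in>{0..<?n}. Si i k * (h k * Sti j k))"
      using i j by (simp add: A_def C_def scalar_prod_def)
    also have "\<dots> = (\<Sum>k\<le>i. Si i k * (h k * Sti j k))"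
      using i Si unfolding lower_unitri_def by (intro sum.mono_neutral_right) auto
    also have "\<dots> = Mo i j"
      using moment_gauss_borel_entry[OF upper_band_lower_unitri[OF Si] gb] by simp
    finally show "mat ?n ?n (\<lambda>(i, j). Mo i j) $$ (i, j) = (A * C) $$ (i, j)"
      using i j by simp
  qed (auto simp: A_def C_def)
  have "det A = prod_list (diag_mat A)"
    by (rule det_lower_triangular[of ?n]) (use Si in \<open>auto simp: A_def lower_unitri_def\<close>)
  also have "diag_mat A = map (\<lambda>i. 1) [0..<?n]"
    using Si by (auto simp: diag_mat_def A_def lower_unitri_def)
  finally have detA: "det A = 1"
    by (simp add: map_replicate_const)
  have "det C = prod_list (diag_mat C)"
    by (rule det_upper_triangular) (use Sti in \<open>auto simp: C_def lower_unitri_def\<close>)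
  also have "diag_mat C = map h [0..<?n]"
    using Sti by (auto simp: diag_mat_def C_def lower_unitri_def)
  finally have detC: "det C = (\<Prod>i<Suc n. h i)"
    by (simp add: prod.distinct_set_conv_list[symmetric] atLeast0LessThan)
  have "det (A * C) = det A * det C"
    by (rule det_mult) (auto simp: A_def C_def)
  then show ?thesis
    unfolding lead_minor_def AC detA detC by simp
qed

definition Xw :: "(nat \<Rightarrow> complex) \<Rightarrow> (nat \<Rightarrow> complex) \<Rightarrow> nat \<Rightarrow> ivec" where
  "Xw w1 w2 k = (\<lambda>j. w1 k * X1 (of_nat k) j + w2 k * X2 (of_nat k) j)"

lemma moment_eq_suminf_Xw: "moment w1 w2 i j = (\<Sum>k. of_nat k ^ i * Xw w1 w2 k j)"
  unfolding moment_def Xw_def Xv_def ..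

locale mixed_gauss_borel =
  fixes w1 w2 :: "nat \<Rightarrow> complex" and S Si St Sti :: imat and h :: ivec
  assumes abs_conv1: "\<And>n. summable (\<lambda>k. norm ((of_nat k :: complex) ^ n * w1 k))"
    and abs_conv2: "\<And>n. summable (\<lambda>k. norm ((of_nat k :: complex) ^ n * w2 k))"
    and minors: "\<And>n. lead_minor (moment w1 w2) n \<noteq> 0"
    and S: "lower_unitri S" and Si: "lower_unitri Si"
    and S_inv: "imul S Si = iid" "imul Si S = iid"
    and St: "lower_unitri St" and Sti: "lower_unitri Sti"
    and St_inv: "imul St Sti = iid" "imul Sti St = iid"
    and gauss_borel: "moment w1 w2 = imul (imul Si (idiag h)) (itrans Sti)"
begin

lemma upper_band_factors:
  "upper_band 0 S" "upper_band 0 Si" "upper_band 0 St" "upper_band 0 Sti"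
  using S Si St Sti by (simp_all add: upper_band_lower_unitri)

lemma h_nonzero: "h n \<noteq> 0"
  using minors[of n] by (simp add: lead_minor_gauss_borel[OF Si Sti gauss_borel])

lemma summable_power_Xw: "summable (\<lambda>k. of_nat k ^ i * Xw w1 w2 k j)"
proof -
  have "(\<lambda>k. of_nat k ^ i * Xw w1 w2 k j)
      = (\<lambda>k. of_nat k ^ (i + j div 2) * (if even j then w1 k else w2 k))"
    by (auto simp: Xw_def X1_def X2_def power_add)
  then show ?thesis
    using summable_norm_cancel[OF abs_conv1] summable_norm_cancel[OF abs_conv2]
    by (cases "even j") simp_all
qed

lemma summable_typeII_Xw: "summable (\<lambda>k. typeII S (of_nat k) n * Xw w1 w2 k j)"
  unfolding typeII_def Xv_def sum_distrib_right mult.assoc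
  by (intro summable_sum summable_mult summable_power_Xw)

lemma suminf_typeII_Xw: "(\<Sum>k. typeII S (of_nat k) n * Xw w1 w2 k j) = h n * Sti j n"
proof -
  note uS = upper_band_factors(1) and uSi = upper_band_factors(2)
  have "(\<Sum>k. typeII S (of_nat k) n * Xw w1 w2 k j)
      = (\<Sum>k. \<Sum>i\<le>n. S n i * (of_nat k ^ i * Xw w1 w2 k j))"
    unfolding typeII_def Xv_def sum_distrib_right mult.assoc ..
  also have "\<dots> = (\<Sum>i\<le>n. S n i * (\<Sum>k. of_nat k ^ i * Xw w1 w2 k j))"
    by (subst suminf_sum) (auto intro!: summable_mult summable_power_Xw
        simp: suminf_mult summable_power_Xw)
  also have "\<dots> = imul S (moment w1 w2) n j"
    unfolding imul_upper_band[OF uS] moment_eq_suminf_Xw by simp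
  also have "imul S (moment w1 w2) = imul (imul (imul S Si) (idiag h)) (itrans Sti)"
    unfolding gauss_borel imul_assoc[OF uS upper_band_imul[OF uSi upper_band_idiag]]
      imul_assoc[OF uS uSi] by simp
  also have "\<dots> n j = h n * Sti j n"
    by (simp add: S_inv imul_iid_left imul_idiag_left itrans_def)
  finally show ?thesis .
qed

lemma summable_typeII_expansion:
  "summable (\<lambda>k. typeII S (of_nat k) n * (\<Sum>j\<le>K. d j * Xw w1 w2 k j))"
  unfolding sum_distrib_left
  by (intro summable_sum) (simp add: mult.left_commute[of _ "d _"] summable_mult summable_typeII_Xw)

lemma suminf_typeII_expansion:
  "(\<Sum>k. typeII S (of_nat k) n * (\<Sum>j\<le>K. d j * Xw w1 w2 k j)) = h n * (\<Sum>j\<le>K. d j * Sti j n)"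
proof -
  have "(\<Sum>k. typeII S (of_nat k) n * (\<Sum>j\<le>K. d j * Xw w1 w2 k j))
      = (\<Sum>j\<le>K. d j * (\<Sum>k. typeII S (of_nat k) n * Xw w1 w2 k j))"
    by (simp add: sum_distrib_left mult.left_commute[of _ "d _"])
      (subst suminf_sum, auto intro!: summable_mult summable_typeII_Xw
        simp: suminf_mult summable_typeII_Xw)
  then show ?thesis
    by (simp add: suminf_typeII_Xw sum_distrib_left mult_ac)
qed

definition linear_form :: "nat \<Rightarrow> nat \<Rightarrow> complex" where
  "linear_form m k = w1 k * typeI h St X1 (of_nat k) m + w2 k * typeI h St X2 (of_nat k) m"

lemma linear_form_eq: "linear_form m k = (1 / h m) * (\<Sum>j\<le>m. St m j * Xw w1 w2 k j)"
  unfolding linear_form_def typeI_def Xw_def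
  by (simp add: sum_distrib_left sum.distrib algebra_simps)

lemma summable_typeII_linear_form: "summable (\<lambda>k. typeII S (of_nat k) n * linear_form m k)"
  unfolding linear_form_eq mult.left_commute[of _ "1 / h m"]
  by (intro summable_mult summable_typeII_expansion)

lemma biorthogonality:
  "(\<Sum>k. typeII S (of_nat k) n * linear_form m k) = (if n = m then 1 else 0)"
proof -
  have "(\<Sum>k. typeII S (of_nat k) n * linear_form m k)
      = (1 / h m) * (\<Sum>k. typeII S (of_nat k) n * (\<Sum>j\<le>m. St m j * Xw w1 w2 k j))"
    unfolding linear_form_eq mult.left_commute[of _ "1 / h m"]
    by (intro suminf_mult summable_typeII_expansion)
  also have "\<dots> = (1 / h m) * (h n * imul St Sti m n)"
    by (simp add: suminf_typeII_expansion imul_upper_band[OF upper_band_factors(3)])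
  finally show ?thesis
    using h_nonzero[of m] by (simp add: St_inv iid_def)
qed

lemma entry_by_biorthogonality:
  assumes "upper_band c A"
  shows "A n m = (\<Sum>k. (\<Sum>j\<le>n + c. A n j * typeII S (of_nat k) j) * linear_form m k)"
proof -
  have "A n m = (\<Sum>j\<le>n + c. A n j * (if j = m then 1 else 0))"
    using upper_bandD[OF assms, of n m] by (auto simp: if_distrib cong: if_cong)
  also have "\<dots> = (\<Sum>j\<le>n + c. A n j * (\<Sum>k. typeII S (of_nat k) j * linear_form m k))"
    by (simp add: biorthogonality)
  also have "\<dots> = (\<Sum>k. (\<Sum>j\<le>n + c. A n j * typeII S (of_nat k) j) * linear_form m k)"
    by (simp add: sum_distrib_right mult.assoc)
      (subst suminf_sum, auto intro!: summable_mult summable_typeII_linear_form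
        simp: suminf_mult summable_typeII_linear_form)
  finally show ?thesis .
qed

lemma suminf_typeI_expansion:
  "(\<Sum>n. typeI h St Xa z n * (h n * (\<Sum>j\<le>K. d j * Sti j n))) = (\<Sum>j\<le>K. d j * Xa z j)"
proof -
  note uSt = upper_band_factors(3) and uSti = upper_band_factors(4)
  define u where "u n = (\<Sum>l\<le>n. St n l * Xa z l)" for n
  have Sti_u: "(\<Sum>n\<le>K. Sti j n * u n) = Xa z j" if "j \<le> K" for j
  proof -
    have "upper_band (K - j) Sti" using upper_band_mono[OF uSti] by simp
    then have "(\<Sum>n\<le>K. Sti j n * u n) = imul Sti (imul St (icol (Xa z))) j 0"
      using that by (simp add: imul_upper_band[OF uSt] imul_upper_band u_def icol_def)
    also have "\<dots> = Xa z j"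
      by (simp add: imul_assoc[OF uSti uSt, symmetric] St_inv imul_iid_left icol_def)
    finally show ?thesis .
  qed
  have "(\<Sum>n. typeI h St Xa z n * (h n * (\<Sum>j\<le>K. d j * Sti j n)))
      = (\<Sum>n\<le>K. typeI h St Xa z n * (h n * (\<Sum>j\<le>K. d j * Sti j n)))"
    by (rule suminf_finite) (auto intro!: sum.neutral upper_bandD[OF uSti])
  also have "\<dots> = (\<Sum>n\<le>K. u n * (\<Sum>j\<le>K. d j * Sti j n))"
    by (simp add: typeI_def u_def h_nonzero)
  also have "\<dots> = (\<Sum>j\<le>K. d j * (\<Sum>n\<le>K. Sti j n * u n))"
    by (simp add: sum_distrib_left sum_distrib_right mult_ac) (rule sum.swap)
  also have "\<dots> = (\<Sum>j\<le>K. d j * Xa z j)"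
    by (simp add: Sti_u)
  finally show ?thesis .
qed

end

definition typeI_poly :: "ivec \<Rightarrow> imat \<Rightarrow> nat \<Rightarrow> nat \<Rightarrow> complex poly" where
  "typeI_poly h St r m = (\<Sum>j\<le>m. monom (if j mod 2 = r then St m j / h m else 0) (j div 2))"

lemma poly_typeI_poly_X1: "poly (typeI_poly h St 0 m) z = typeI h St X1 z m"
  unfolding typeI_poly_def typeI_def
  by (simp add: poly_sum poly_monom sum_distrib_left)
    (rule sum.cong; simp add: X1_def even_iff_mod_2_eq_zero)

lemma poly_typeI_poly_X2: "poly (typeI_poly h St 1 m) z = typeI h St X2 z m"
  unfolding typeI_poly_def typeI_def
  by (simp add: poly_sum poly_monom sum_distrib_left)
    (rule sum.cong; simp add: X2_def odd_iff_mod_2_eq_one)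

lemma coeff_typeI_poly_eq_0:
  assumes "m < 2 * l + r"
  shows "coeff (typeI_poly h St r m) l = 0"
  unfolding typeI_poly_def coeff_sum coeff_monom
proof (intro sum.neutral ballI)
  fix j assume "j \<in> {..m}"
  then have "\<not> (j div 2 = l \<and> j mod 2 = r)"
    using assms div_mult_mod_eq[of j 2] by auto
  then show "(if j div 2 = l then if j mod 2 = r then St m j / h m else 0 else 0) = 0"
    by auto
qed

lemma coeff_mult_pcompose_eq_0:
  fixes p \<sigma> :: "'a::idom poly"
  assumes p: "\<And>l. m < 2 * l + r \<Longrightarrow> coeff p l = 0"
    and i: "2 * degree \<sigma> + m < 2 * i + r"
  shows "coeff (\<sigma> * pcompose p [:1, 1:]) i = 0"
proof (cases "p = 0")
  case False
  then have "2 * degree p + r \<le> m"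
    using p[of "degree p"] by (meson leading_coeff_0_iff not_le)
  then have "degree (\<sigma> * pcompose p [:1, 1:]) < i"
    using degree_mult_le[of \<sigma> "pcompose p [:1, 1:]"] i by (simp add: degree_pcompose)
  then show ?thesis by (rule coeff_eq_0)
qed simp

definition interleave :: "'a::zero poly \<Rightarrow> 'a poly \<Rightarrow> nat \<Rightarrow> 'a" where
  "interleave p q j = coeff (if even j then p else q) (j div 2)"

lemma poly_eq_sum_coeff:
  fixes p :: "'a::comm_semiring_1 poly"
  assumes "degree p \<le> D"
  shows "poly p x = (\<Sum>i\<le>D. coeff p i * x ^ i)"
  unfolding poly_altdef using assms by (intro sum.mono_neutral_left) (auto simp: coeff_eq_0)

lemma poly_eq_interleave_X1:
  "degree p \<le> D \<Longrightarrow> poly p x = (\<Sum>j\<le>Suc (2 * D). interleave p q j * X1 x j)"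
  unfolding sum.in_pairs_0 by (simp add: poly_eq_sum_coeff interleave_def X1_def)

lemma poly_eq_interleave_X2:
  "degree q \<le> D \<Longrightarrow> poly q x = (\<Sum>j\<le>Suc (2 * D). interleave p q j * X2 x j)"
  unfolding sum.in_pairs_0 by (simp add: poly_eq_sum_coeff interleave_def X2_def)

lemma interleave_Xw:
  assumes "degree p \<le> D" "degree q \<le> D"
  shows "w1 k * poly p (of_nat k) + w2 k * poly q (of_nat k)
    = (\<Sum>j\<le>Suc (2 * D). interleave p q j * Xw w1 w2 k j)"
  unfolding poly_eq_interleave_X1[OF assms(1), of _ q] poly_eq_interleave_X2[OF assms(2), of _ p]
    sum_distrib_left sum.distrib[symmetric] Xw_def
  by (intro sum.cong refl) (simp add: algebra_simps)

section \<open>The Laguerre--Freud matrix\<close>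

locale laguerre_freud = mixed_gauss_borel +
  fixes Li :: imat and \<theta> \<sigma>1 \<sigma>2 :: "complex poly"
  assumes Li: "lower_tri Li" and Li_Pascal: "imul Li Pascal = iid"
    and pearson1: "\<And>k. poly \<theta> (of_nat (k + 1)) * w1 (k + 1) = poly \<sigma>1 (of_nat k) * w1 k"
    and pearson2: "\<And>k. poly \<theta> (of_nat (k + 1)) * w2 (k + 1) = poly \<sigma>2 (of_nat k) * w2 k"
    and theta0: "poly \<theta> 0 = 0"
begin

definition LF_matrix :: imat where
  "LF_matrix = imul (imul (imul S Li) Si) (ipoly \<theta> (imul (imul S Lam) Si))"

abbreviation \<sigma>_degree :: nat where
  "\<sigma>_degree \<equiv> max (degree \<sigma>1) (degree \<sigma>2)"

lemma upper_band_LF_matrix: "upper_band (degree \<theta>) LF_matrix"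
proof -
  note uS = upper_band_factors(1) and uSi = upper_band_factors(2)
  have "upper_band 1 (imul (imul S Lam) Si)"
    using upper_band_imul[OF upper_band_imul[OF uS upper_band_Lam] uSi] by simp
  then show ?thesis
    unfolding LF_matrix_def
    using upper_band_imul[OF upper_band_imul[OF upper_band_imul[OF uS upper_band_lower_tri[OF Li]]
          uSi] upper_band_ipoly] by simp
qed

lemma LF_matrix_typeII:
  "(\<Sum>m. LF_matrix n m * typeII S z m) = poly \<theta> z * typeII S (z - 1) n"
  "(\<Sum>m\<le>n + degree \<theta>. LF_matrix n m * typeII S z m) = poly \<theta> z * typeII S (z - 1) n"
proof -
  have entry: "imul LF_matrix (icol (typeII S z)) n 0 = poly \<theta> z * typeII S (z - 1) n"
    unfolding LF_matrix_def laguerre_freud_typeII[OF upper_band_factors(1,2) S_inv(2) Li Li_Pascal]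
    by (simp add: icol_def)
  then show "(\<Sum>m. LF_matrix n m * typeII S z m) = poly \<theta> z * typeII S (z - 1) n"
    by (simp add: imul_def icol_def)
  from entry show "(\<Sum>m\<le>n + degree \<theta>. LF_matrix n m * typeII S z m) = poly \<theta> z * typeII S (z - 1) n"
    by (simp add: imul_upper_band[OF upper_band_LF_matrix] icol_def)
qed

definition LF_poly1 :: "nat \<Rightarrow> complex poly" where
  "LF_poly1 m = \<sigma>1 * pcompose (typeI_poly h St 0 m) [:1, 1:]"

definition LF_poly2 :: "nat \<Rightarrow> complex poly" where
  "LF_poly2 m = \<sigma>2 * pcompose (typeI_poly h St 1 m) [:1, 1:]"

definition LF_coeff :: "nat \<Rightarrow> nat \<Rightarrow> complex" where
  "LF_coeff m = interleave (LF_poly1 m) (LF_poly2 m)"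

lemma poly_LF_poly1: "poly (LF_poly1 m) x = poly \<sigma>1 x * typeI h St X1 (x + 1) m"
  unfolding LF_poly1_def poly_mult poly_pcompose poly_typeI_poly_X1 by (simp add: add.commute)

lemma poly_LF_poly2: "poly (LF_poly2 m) x = poly \<sigma>2 x * typeI h St X2 (x + 1) m"
  unfolding LF_poly2_def poly_mult poly_pcompose poly_typeI_poly_X2 by (simp add: add.commute)

lemma coeff_LF_poly1_eq_0: "2 * \<sigma>_degree + m < 2 * i \<Longrightarrow> coeff (LF_poly1 m) i = 0"
  unfolding LF_poly1_def
  by (rule coeff_mult_pcompose_eq_0[where r = 0]) (auto intro: coeff_typeI_poly_eq_0)

lemma coeff_LF_poly2_eq_0: "2 * \<sigma>_degree + m < 2 * i + 1 \<Longrightarrow> coeff (LF_poly2 m) i = 0"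
  unfolding LF_poly2_def
  by (rule coeff_mult_pcompose_eq_0[where r = 1]) (auto intro: coeff_typeI_poly_eq_0)

lemma LF_coeff_eq_0:
  assumes "2 * \<sigma>_degree + m < j"
  shows "LF_coeff m j = 0"
proof (cases "even j")
  case True
  then show ?thesis
    using assms coeff_LF_poly1_eq_0[of m "j div 2"] by (auto simp: LF_coeff_def interleave_def)
next
  case False
  then show ?thesis
    using assms coeff_LF_poly2_eq_0[of m "j div 2"] by (auto simp: LF_coeff_def interleave_def)
qed

lemma degree_LF_poly:
  "degree (LF_poly1 m) \<le> \<sigma>_degree + m" "degree (LF_poly2 m) \<le> \<sigma>_degree + m"
  by (auto intro!: degree_le coeff_LF_poly1_eq_0 coeff_LF_poly2_eq_0)

lemma poly_LF_poly_eq_sum: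
  "poly (LF_poly1 m) x = (\<Sum>j\<le>Suc (2 * (\<sigma>_degree + m)). LF_coeff m j * X1 x j)"
  "poly (LF_poly2 m) x = (\<Sum>j\<le>Suc (2 * (\<sigma>_degree + m)). LF_coeff m j * X2 x j)"
  unfolding LF_coeff_def
  by (rule poly_eq_interleave_X1 poly_eq_interleave_X2, rule degree_LF_poly)+

lemma pearson_shift:
  "(\<Sum>k. poly \<theta> (of_nat k) * typeII S (of_nat k - 1) n * linear_form m k)
    = (\<Sum>k. typeII S (of_nat k) n * (\<Sum>j\<le>Suc (2 * (\<sigma>_degree + m)). LF_coeff m j * Xw w1 w2 k j))"
proof -
  define g where "g = (\<lambda>k. poly \<theta> (of_nat k) * typeII S (of_nat k - 1) n * linear_form m k)"
  have shift: "g (Suc k) = typeII S (of_nat k) n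
      * (\<Sum>j\<le>Suc (2 * (\<sigma>_degree + m)). LF_coeff m j * Xw w1 w2 k j)" for k
  proof -
    have "g (Suc k) = typeII S (of_nat k) n *
        (poly \<theta> (of_nat (k + 1)) * w1 (k + 1) * typeI h St X1 (of_nat k + 1) m
        + poly \<theta> (of_nat (k + 1)) * w2 (k + 1) * typeI h St X2 (of_nat k + 1) m)"
      by (simp add: g_def linear_form_def algebra_simps)
    also have "\<dots> = typeII S (of_nat k) n *
        (w1 k * poly (LF_poly1 m) (of_nat k) + w2 k * poly (LF_poly2 m) (of_nat k))"
      unfolding pearson1 pearson2 poly_LF_poly1 poly_LF_poly2 by (simp add: algebra_simps)
    also have "\<dots> = typeII S (of_nat k) n
        * (\<Sum>j\<le>Suc (2 * (\<sigma>_degree + m)). LF_coeff m j * Xw w1 w2 k j)"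
      unfolding LF_coeff_def by (simp only: interleave_Xw[OF degree_LF_poly])
    finally show ?thesis .
  qed
  have "summable (\<lambda>k. g (Suc k))"
    unfolding shift by (rule summable_typeII_expansion)
  then have "summable g"
    by (simp only: summable_Suc_iff)
  moreover have "g 0 = 0"
    by (simp add: g_def theta0)
  ultimately have "suminf g = (\<Sum>k. g (Suc k))"
    using suminf_split_head[of g] by simp
  then show ?thesis
    unfolding shift by (simp only: g_def)
qed

lemma LF_matrix_eq:
  "LF_matrix n m = h n * (\<Sum>j\<le>Suc (2 * (\<sigma>_degree + m)). LF_coeff m j * Sti j n)"
proof -
  have "LF_matrix n m
      = (\<Sum>k. (\<Sum>j\<le>n + degree \<theta>. LF_matrix n j * typeII S (of_nat k) j) * linear_form m k)"
    by (rule entry_by_biorthogonality[OF upper_band_LF_matrix])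
  also have "\<dots> = (\<Sum>k. poly \<theta> (of_nat k) * typeII S (of_nat k - 1) n * linear_form m k)"
    by (simp only: LF_matrix_typeII(2))
  finally show ?thesis
    by (simp only: pearson_shift suminf_typeII_expansion)
qed

lemma LF_matrix_lower_band:
  assumes "m + 2 * \<sigma>_degree < n"
  shows "LF_matrix n m = 0"
proof -
  have vanish: "LF_coeff m j * Sti j n = 0" for j
  proof (cases "j < n")
    case True
    then show ?thesis using upper_bandD[OF upper_band_factors(4), of j n] by simp
  next
    case False
    then show ?thesis using assms LF_coeff_eq_0[of m j] by simp
  qed
  then show ?thesis
    by (simp only: LF_matrix_eq vanish sum.neutral_const mult_zero_right)
qed

lemma typeI_LF_matrix:
  "(\<Sum>n. typeI h St X1 z n * LF_matrix n m) = typeI h St X1 (z + 1) m * poly \<sigma>1 z"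
  "(\<Sum>n. typeI h St X2 z n * LF_matrix n m) = typeI h St X2 (z + 1) m * poly \<sigma>2 z"
  unfolding LF_matrix_eq suminf_typeI_expansion poly_LF_poly_eq_sum[symmetric] poly_LF_poly1 poly_LF_poly2
  by (simp_all only: mult.commute)

end

theorem mainTheorem7:
  fixes w1 w2 :: "nat \<Rightarrow> complex"
    and S Si St Sti Li :: imat and h :: "nat \<Rightarrow> complex"
    and \<theta> \<sigma>1 \<sigma>2 :: "complex poly" and N M :: nat
  assumes abs_conv1: "\<And>n. summable (\<lambda>k. norm ((of_nat k :: complex) ^ n * w1 k))"
    and abs_conv2: "\<And>n. summable (\<lambda>k. norm ((of_nat k :: complex) ^ n * w2 k))"
    and minors: "\<And>n. lead_minor (moment w1 w2) n \<noteq> 0"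
    and S: "lower_unitri S" and Si: "lower_unitri Si"
    and S_inv: "imul S Si = iid" "imul Si S = iid"
    and St: "lower_unitri St" and Sti: "lower_unitri Sti"
    and St_inv: "imul St Sti = iid" "imul Sti St = iid"
    and gauss_borel: "moment w1 w2 = imul (imul Si (idiag h)) (itrans Sti)"
    and Li: "lower_tri Li" and L_inv: "imul Pascal Li = iid" "imul Li Pascal = iid"
    and pearson1: "\<And>k. poly \<theta> (of_nat (k + 1)) * w1 (k + 1) = poly \<sigma>1 (of_nat k) * w1 k"
    and pearson2: "\<And>k. poly \<theta> (of_nat (k + 1)) * w2 (k + 1) = poly \<sigma>2 (of_nat k) * w2 k"
    and theta0: "poly \<theta> 0 = 0"
    and degN: "degree \<theta> = N"
    and degM: "max (degree \<sigma>1) (degree \<sigma>2) = M"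
  defines "\<Psi> \<equiv> imul (imul (imul S Li) Si) (ipoly \<theta> (imul (imul S Lam) Si))"
  shows "(\<forall>n m. n > m + 2 * M \<longrightarrow> \<Psi> n m = 0)
       \<and> (\<forall>n m. m > n + N \<longrightarrow> \<Psi> n m = 0)
       \<and> (\<forall>z n. poly \<theta> z * typeII S (z - 1) n = (\<Sum>m. \<Psi> n m * typeII S z m))
       \<and> (\<forall>z m. typeI h St X1 (z + 1) m * poly \<sigma>1 z = (\<Sum>n. typeI h St X1 z n * \<Psi> n m))
       \<and> (\<forall>z m. typeI h St X2 (z + 1) m * poly \<sigma>2 z = (\<Sum>n. typeI h St X2 z n * \<Psi> n m))"
proof -
  interpret laguerre_freud w1 w2 S Si St Sti h Li \<theta> \<sigma>1 \<sigma>2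
    by unfold_locales (fact abs_conv1 abs_conv2 minors S Si S_inv St Sti St_inv gauss_borel Li
        L_inv(2) pearson1 pearson2 theta0)+
  have \<Psi>: "\<Psi> = LF_matrix"
    unfolding \<Psi>_def LF_matrix_def ..
  show ?thesis
    unfolding \<Psi>
    using LF_matrix_lower_band upper_bandD[OF upper_band_LF_matrix] LF_matrix_typeII(1)
      typeI_LF_matrix
    by (simp add: degN degM)
qed

end
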